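(* Let $A_1,A_2,A_3\subset\mathbb{R}^3$ be finite sets with $|A_1|=3$, $|A_2|=2$, $|A_3|=1$ such that $A_1\cup A_2\cup A_3$ is a set of $6$ points in general position. Then there is a unique triple of mutually orthogonal affine planes $H_1,H_2,H_3$ with $A_i\subset H_i$ for $i=1,2,3$.
   Context: A finite set $X\subset\mathbb{R}^3$ is in general position if no $3$ points of $X$ are collinear, no $4$ are coplanar, no $6$ lie in the union of $2$ orthogonal planes, and no $7$ lie in the union of $3$ mutually orthogonal planes. Affine planes are (mutually) orthogonal if their normal vectors are pairwise orthogonal. *)

theory Defs
  imports "HOL-Analysis.Analysis"
begin

definition affine_plane :: "(real^3) set \<Rightarrow> bool" where
  "affine_plane H \<longleftrightarrow> (\<exists>a b. a \<noteq> 0 \<and> H = {x. a \<bullet> x = b})"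

definition orth_planes :: "(real^3) set \<Rightarrow> (real^3) set \<Rightarrow> bool" where
  "orth_planes H K \<longleftrightarrow> (\<exists>a b c d. a \<noteq> 0 \<and> c \<noteq> 0 \<and> H = {x. a \<bullet> x = b} \<and>
      K = {x. c \<bullet> x = d} \<and> a \<bullet> c = 0)"

definition mutually_orth_planes :: "(real^3) set \<Rightarrow> (real^3) set \<Rightarrow> (real^3) set \<Rightarrow> bool" where
  "mutually_orth_planes H1 H2 H3 \<longleftrightarrow>
     orth_planes H1 H2 \<and> orth_planes H1 H3 \<and> orth_planes H2 H3"

definition general_position :: "(real^3) set \<Rightarrow> bool" where
  "general_position X \<longleftrightarrow> finite X \<and>
     (\<forall>S\<subseteq>X. card S = 3 \<longrightarrow> \<not> collinear S) \<and>
     (\<forall>S\<subseteq>X. card S = 4 \<longrightarrow> \<not> coplanar S) \<and>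
     (\<forall>H K. orth_planes H K \<longrightarrow> \<not> (\<exists>S\<subseteq>X. card S = 6 \<and> S \<subseteq> H \<union> K)) \<and>
     (\<forall>H1 H2 H3. mutually_orth_planes H1 H2 H3 \<longrightarrow>
        \<not> (\<exists>S\<subseteq>X. card S = 7 \<and> S \<subseteq> H1 \<union> H2 \<union> H3))"

end

theory Submission
  imports Defs "HOL-Analysis.Cross3"
begin

text \<open>Write A1 = {p1, p2, p3}, A2 = {p, q}, A3 = {r}. The plane H1 is forced to be the plane
  through A1, with normal n1 = (p2 - p1) \<times> (p3 - p1). The normal of H2 is orthogonal to n1 and
  to the chord q - p, hence parallel to n2 = n1 \<times> (q - p), and the normal of H3 is orthogonal
  to n1 and n2, hence parallel to n1 \<times> n2. These normals determine the three planes, and the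
  planes they determine work, as long as n2 \<noteq> 0. If n2 = 0, the chord q - p is parallel to
  n1, so the plane through p, q, r (not collinear by general position) is orthogonal to H1, and
  all six points lie on two orthogonal planes, contradicting general position.\<close>

unbundle cross3_syntax

definition plane_through :: "real^3 \<Rightarrow> real^3 \<Rightarrow> (real^3) set" where
  "plane_through n p = {x. n \<bullet> x = n \<bullet> p}"

lemma mem_plane_through: "x \<in> plane_through n p \<longleftrightarrow> n \<bullet> (x - p) = 0"
  by (simp add: plane_through_def inner_diff_right)

lemma affine_plane_plane_through: "n \<noteq> 0 \<Longrightarrow> affine_plane (plane_through n p)"
  unfolding affine_plane_def plane_through_def by blast

lemma orth_planes_plane_through:
  "n \<noteq> 0 \<Longrightarrow> m \<noteq> 0 \<Longrightarrow> n \<bullet> m = 0 \<Longrightarrow> orth_planes (plane_through n p) (plane_through m q)"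
  unfolding orth_planes_def plane_through_def by blast

lemma plane_through_cross3: "{a, b, c} \<subseteq> plane_through ((b - a) \<times> (c - a)) a"
  by (simp add: mem_plane_through dot_cross_self inner_commute)

lemma cross3_diff_ne_0: "\<not> collinear {a, b, c} \<Longrightarrow> (b - a) \<times> (c - a) \<noteq> 0"
  using collinear_3[of b a c] by (simp add: cross_eq_0 insert_commute)

lemma hyperplane_eq_imp_normal_parallel:
  fixes a c :: "'a::real_inner"
  assumes "a \<noteq> 0" and "{x. a \<bullet> x = b} = {x. c \<bullet> x = d}"
  shows "\<exists>k. c = k *\<^sub>R a"
proof -
  define x0 where "x0 = (b / (a \<bullet> a)) *\<^sub>R a"
  define v where "v = c - ((c \<bullet> a) / (a \<bullet> a)) *\<^sub>R a"
  have "a \<bullet> a \<noteq> 0" using assms(1) by simp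
  then have av: "a \<bullet> v = 0" and "a \<bullet> x0 = b" and "a \<bullet> (x0 + v) = b"
    by (simp_all add: v_def x0_def inner_diff_right inner_add_right inner_commute)
  then have "c \<bullet> x0 = d" and "c \<bullet> (x0 + v) = d" using assms(2) by blast+
  then have cv: "c \<bullet> v = 0" by (simp add: inner_add_right)
  have "v \<bullet> v = c \<bullet> v - ((c \<bullet> a) / (a \<bullet> a)) * (a \<bullet> v)"
    by (simp add: v_def inner_diff_left inner_commute)
  then have "v = 0" using cv av by simp
  then show ?thesis unfolding v_def by (metis eq_iff_diff_eq_0)
qed

lemma orth_planes_normals_orthogonal:
  assumes "orth_planes H K" and "H = {x. a \<bullet> x = b}" and "K = {x. c \<bullet> x = d}"
  shows "a \<bullet> c = 0"
proof -
  obtain a' b' c' d' where "a' \<noteq> 0" "c' \<noteq> 0" "a' \<bullet> c' = 0"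
    and "H = {x. a' \<bullet> x = b'}" "K = {x. c' \<bullet> x = d'}"
    using assms(1) unfolding orth_planes_def by blast
  moreover from calculation assms obtain k l where "a = k *\<^sub>R a'" "c = l *\<^sub>R c'"
    using hyperplane_eq_imp_normal_parallel by metis
  ultimately show ?thesis by simp
qed

lemma orthogonal_both_imp_parallel_cross3:
  fixes a u w :: "real^3"
  assumes "a \<bullet> u = 0" "a \<bullet> w = 0" "u \<times> w \<noteq> 0"
  shows "\<exists>k. a = k *\<^sub>R (u \<times> w)"
proof -
  have "a \<times> (u \<times> w) = 0" using assms by (simp add: Lagrange)
  then have "collinear {0, u \<times> w, a}" by (metis cross_eq_0 insert_commute)
  then show ?thesis using assms(3) collinear_lemma[of "u \<times> w" a] by auto
qed

lemma plane_eq_plane_through_cross3: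
  fixes a u w :: "real^3"
  assumes "a \<noteq> 0" "a \<bullet> u = 0" "a \<bullet> w = 0" "u \<times> w \<noteq> 0" and "p \<in> {x. a \<bullet> x = b}"
  shows "{x. a \<bullet> x = b} = plane_through (u \<times> w) p"
proof -
  obtain k where k: "a = k *\<^sub>R (u \<times> w)"
    using orthogonal_both_imp_parallel_cross3 assms(2-4) by blast
  with assms(1) have "k \<noteq> 0" by auto
  with k assms(5) show ?thesis by (auto simp: plane_through_def)
qed

text \<open>If the chord from p to q is parallel to the normal n, the plane through p, q, r contains
  the direction n and is therefore orthogonal to every plane with normal n.\<close>
lemma orth_plane_through_parallel_chord:
  assumes "\<not> collinear {p, q, r}" "n \<noteq> 0" "n \<times> (q - p) = 0"
  shows "\<exists>K. orth_planes (plane_through n p0) K \<and> {p, q, r} \<subseteq> K"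
proof (intro exI conjI)
  let ?m = "(q - p) \<times> (r - p)"
  have "n \<bullet> ?m = (n \<times> (q - p)) \<bullet> (r - p)"
    by (metis cross_triple inner_commute)
  then show "orth_planes (plane_through n p0) (plane_through ?m p)"
    using assms cross3_diff_ne_0 orth_planes_plane_through by simp
qed (rule plane_through_cross3)

lemma mutually_orth_planes_through_eq:
  fixes p1 p2 p3 p q r :: "real^3"
  defines "n1 \<equiv> (p2 - p1) \<times> (p3 - p1)"
  assumes n2: "n1 \<times> (q - p) \<noteq> 0"
    and planes: "affine_plane H1" "affine_plane H2" "affine_plane H3"
    and orth: "mutually_orth_planes H1 H2 H3"
    and through: "{p1, p2, p3} \<subseteq> H1" "{p, q} \<subseteq> H2" "r \<in> H3"
  shows "H1 = plane_through n1 p1 \<and> H2 = plane_through (n1 \<times> (q - p)) p \<and>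
    H3 = plane_through (n1 \<times> (n1 \<times> (q - p))) r"
proof -
  define n2 where "n2 = n1 \<times> (q - p)"
  have n1: "n1 \<noteq> 0" using n2 by auto
  have "n1 \<bullet> n2 = 0" by (simp add: n2_def dot_cross_self)
  then have n3: "n1 \<times> n2 \<noteq> 0" using n1 n2 norm_and_cross_eq_0 n2_def by blast
  obtain a b c d e f where normals: "a \<noteq> 0" "H1 = {x. a \<bullet> x = b}" "c \<noteq> 0" "H2 = {x. c \<bullet> x = d}"
    "e \<noteq> 0" "H3 = {x. e \<bullet> x = f}"
    using planes unfolding affine_plane_def by metis
  have orth: "orth_planes H1 H2" "orth_planes H1 H3" "orth_planes H2 H3"
    using orth unfolding mutually_orth_planes_def by auto
  have "a \<bullet> (p2 - p1) = 0" "a \<bullet> (p3 - p1) = 0"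
    using through(1) normals(2) by (auto simp: inner_diff_right)
  then have H1: "H1 = plane_through n1 p1"
    unfolding normals(2) n1_def
    by (rule plane_eq_plane_through_cross3[OF normals(1)]) (use n1 through(1) normals(2) n1_def in auto)
  then have "c \<bullet> n1 = 0"
    using orth_planes_normals_orthogonal[OF orth(1) H1[unfolded plane_through_def] normals(4)]
    by (simp add: inner_commute)
  moreover have "c \<bullet> (q - p) = 0" using through(2) normals(4) by (auto simp: inner_diff_right)
  ultimately have H2: "H2 = plane_through n2 p"
    unfolding normals(4) n2_def
    by (rule plane_eq_plane_through_cross3[OF normals(3)]) (use n2 through(2) normals(4) in auto)
  have "e \<bullet> n1 = 0"
    using orth_planes_normals_orthogonal[OF orth(2) H1[unfolded plane_through_def] normals(6)]
    by (simp add: inner_commute)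
  moreover have "e \<bullet> n2 = 0"
    using orth_planes_normals_orthogonal[OF orth(3) H2[unfolded plane_through_def] normals(6)]
    by (simp add: inner_commute)
  ultimately have "H3 = plane_through (n1 \<times> n2) r"
    unfolding normals(6)
    by (rule plane_eq_plane_through_cross3[OF normals(5)]) (use n3 through(3) normals(6) in auto)
  with H1 H2 show ?thesis by (simp add: n2_def)
qed

lemma ex1_mutually_orth_planes_through:
  fixes p1 p2 p3 p q r :: "real^3"
  assumes "((p2 - p1) \<times> (p3 - p1)) \<times> (q - p) \<noteq> 0"
  shows "\<exists>!(H1, H2, H3). affine_plane H1 \<and> affine_plane H2 \<and> affine_plane H3 \<and>
    mutually_orth_planes H1 H2 H3 \<and> {p1, p2, p3} \<subseteq> H1 \<and> {p, q} \<subseteq> H2 \<and> {r} \<subseteq> H3"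
proof -
  define n1 where "n1 = (p2 - p1) \<times> (p3 - p1)"
  define n2 where "n2 = n1 \<times> (q - p)"
  have n2: "n2 \<noteq> 0" using assms by (simp add: n1_def n2_def)
  then have n1: "n1 \<noteq> 0" by (auto simp: n2_def)
  have "n1 \<bullet> n2 = 0" by (simp add: n2_def dot_cross_self)
  then have n3: "n1 \<times> n2 \<noteq> 0" using n1 n2 norm_and_cross_eq_0 by blast
  have "mutually_orth_planes (plane_through n1 p1) (plane_through n2 p)
      (plane_through (n1 \<times> n2) r)"
    using n1 n2 n3 \<open>n1 \<bullet> n2 = 0\<close>
    by (simp add: mutually_orth_planes_def orth_planes_plane_through dot_cross_self)
  moreover have "{p1, p2, p3} \<subseteq> plane_through n1 p1"
    unfolding n1_def by (rule plane_through_cross3)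
  moreover have "{p, q} \<subseteq> plane_through n2 p" "r \<in> plane_through (n1 \<times> n2) r"
    by (simp_all add: mem_plane_through n2_def dot_cross_self)
  ultimately have "affine_plane (plane_through n1 p1) \<and> affine_plane (plane_through n2 p) \<and>
      affine_plane (plane_through (n1 \<times> n2) r) \<and>
      mutually_orth_planes (plane_through n1 p1) (plane_through n2 p) (plane_through (n1 \<times> n2) r) \<and>
      {p1, p2, p3} \<subseteq> plane_through n1 p1 \<and> {p, q} \<subseteq> plane_through n2 p \<and>
      {r} \<subseteq> plane_through (n1 \<times> n2) r"
    using n1 n2 n3 by (simp add: affine_plane_plane_through)
  then show ?thesis
    using mutually_orth_planes_through_eq[of p2 p1 p3 q p, folded n1_def n2_def] n2
    by (intro ex1I[of _ "(plane_through n1 p1, plane_through n2 p, plane_through (n1 \<times> n2) r)"])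
      auto
qed

theorem mainTheorem7:
  fixes A1 A2 A3 :: "(real^3) set"
  assumes "finite A1" "finite A2" "finite A3"
    and "card A1 = 3" "card A2 = 2" "card A3 = 1"
    and "card (A1 \<union> A2 \<union> A3) = 6"
    and "general_position (A1 \<union> A2 \<union> A3)"
  shows "\<exists>!(H1, H2, H3). affine_plane H1 \<and> affine_plane H2 \<and> affine_plane H3 \<and>
           mutually_orth_planes H1 H2 H3 \<and> A1 \<subseteq> H1 \<and> A2 \<subseteq> H2 \<and> A3 \<subseteq> H3"
proof -
  obtain p1 p2 p3 where A1: "A1 = {p1, p2, p3}" using assms(4) card_3_iff by metis
  obtain p q where A2: "A2 = {p, q}" using assms(5) card_2_iff by metis
  obtain r where A3: "A3 = {r}" using assms(6) by (auto simp: card_1_singleton_iff)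
  let ?X = "A1 \<union> A2 \<union> A3"
  have "?X = set [p1, p2, p3, p, q, r]" using A1 A2 A3 by auto
  then have "distinct [p1, p2, p3, p, q, r]" using assms(7) by (intro card_distinct) simp
  then have "card {p, q, r} = 3" by simp
  moreover have "{p, q, r} \<subseteq> ?X" using A2 A3 by auto
  ultimately have gp: "\<not> collinear A1" "\<not> collinear {p, q, r}"
    "\<And>H K. orth_planes H K \<Longrightarrow> \<not> ?X \<subseteq> H \<union> K"
    using assms(4,7,8) unfolding general_position_def by (blast, blast, blast)
  let ?n1 = "(p2 - p1) \<times> (p3 - p1)"
  have "?n1 \<times> (q - p) \<noteq> 0"
  proof
    assume "?n1 \<times> (q - p) = 0"
    then obtain K where "orth_planes (plane_through ?n1 p1) K" "{p, q, r} \<subseteq> K"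
      using orth_plane_through_parallel_chord gp(2) cross3_diff_ne_0 gp(1) A1 by metis
    moreover have "A1 \<subseteq> plane_through ?n1 p1" unfolding A1 by (rule plane_through_cross3)
    ultimately show False using gp(3) A1 A2 A3 by blast
  qed
  then show ?thesis using ex1_mutually_orth_planes_through A1 A2 A3 by simp
qed

end
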